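(* Let $\mathcal{M}=(E,r)$ be a matroid and $D,D_1,D_2\subseteq E$ with $D_1\cap D_2=\{e\}$ and $D=D_1\cup D_2$, such that $\mathcal{M}|_D=P(\mathcal{M}|_{D_1},\mathcal{M}|_{D_2})$ is the parallel connection along $e$. (a) $D$ is a $k$-fold circuit if and only if each $D_i$ is a $k_i$-fold circuit (for some $k_1,k_2$) with $k=k_1+k_2$. (b) If $D_i$ is a $k_i$-fold circuit with principal partition $\mathcal{A}_i$ and $e\in A^i\in\mathcal{A}_i$ ($i=1,2$), then the principal partition of $D$ is $\mathcal{A}=(\mathcal{A}_1\setminus\{A^1\})\cup(\mathcal{A}_2\setminus\{A^2\})\cup\{A^1-e,\,A^2-e,\,\{e\}\}$.
   Context: $\mathcal{M}|_X$ denotes restriction. For matroids $\mathcal{M}_1,\mathcal{M}_2$ on $E_1,E_2$ with $E_1\cap E_2=\{e\}$, $e$ neither a loop nor a coloop of either, the parallel connection $P(\mathcal{M}_1,\mathcal{M}_2)$ is the matroid on $E_1\cup E_2$ whose circuits are the circuits of $\mathcal{M}_1$, the circuits of $\mathcal{M}_2$, and the sets $(C_1\cup C_2)-e$ with $C_i$ a circuit of $\mathcal{M}_i$ containing $e$, $i=1,2$. A set is cyclic if it is a union of circuits. For an integer $k\ge0$, a $k$-fold circuit is a cyclic set $D$ with $r(D)=|D|-k$. For $k\ge1$, its principal partition is the partition $\{A_1,\dots,A_\ell\}$ of $D$ such that $\{D\setminus A_i\}$ is exactly the set of $(k-1)$-fold circuits contained in $D$. *)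

theory Defs
  imports Main "HOL-Library.Disjoint_Sets"
begin

definition matroid :: "'a set \<Rightarrow> ('a set \<Rightarrow> nat) \<Rightarrow> bool" where
  "matroid E r \<longleftrightarrow> finite E
     \<and> (\<forall>X. X \<subseteq> E \<longrightarrow> r X \<le> card X)
     \<and> (\<forall>X Y. X \<subseteq> Y \<and> Y \<subseteq> E \<longrightarrow> r X \<le> r Y)
     \<and> (\<forall>X Y. X \<subseteq> E \<and> Y \<subseteq> E \<longrightarrow> r (X \<union> Y) + r (X \<inter> Y) \<le> r X + r Y)"

definition indep :: "'a set \<Rightarrow> ('a set \<Rightarrow> nat) \<Rightarrow> 'a set \<Rightarrow> bool" where
  "indep E r X \<longleftrightarrow> X \<subseteq> E \<and> r X = card X"

definition circuit :: "'a set \<Rightarrow> ('a set \<Rightarrow> nat) \<Rightarrow> 'a set \<Rightarrow> bool" where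
  "circuit E r C \<longleftrightarrow> C \<subseteq> E \<and> \<not> indep E r C \<and> (\<forall>Y. Y \<subset> C \<longrightarrow> indep E r Y)"

definition restr_circuit :: "'a set \<Rightarrow> ('a set \<Rightarrow> nat) \<Rightarrow> 'a set \<Rightarrow> 'a set \<Rightarrow> bool" where
  "restr_circuit E r X C \<longleftrightarrow> circuit E r C \<and> C \<subseteq> X"

definition is_loop_restr :: "'a set \<Rightarrow> ('a set \<Rightarrow> nat) \<Rightarrow> 'a set \<Rightarrow> 'a \<Rightarrow> bool" where
  "is_loop_restr E r X e \<longleftrightarrow> e \<in> X \<and> restr_circuit E r X {e}"

definition is_coloop_restr :: "'a set \<Rightarrow> ('a set \<Rightarrow> nat) \<Rightarrow> 'a set \<Rightarrow> 'a \<Rightarrow> bool" where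
  "is_coloop_restr E r X e \<longleftrightarrow> e \<in> X \<and> \<not> (\<exists>C. restr_circuit E r X C \<and> e \<in> C)"

text \<open>M|(D1 \<union> D2) is the parallel connection P(M|D1, M|D2) along e.\<close>
definition parallel_connection_restr ::
  "'a set \<Rightarrow> ('a set \<Rightarrow> nat) \<Rightarrow> 'a set \<Rightarrow> 'a set \<Rightarrow> 'a \<Rightarrow> bool" where
  "parallel_connection_restr E r D1 D2 e \<longleftrightarrow>
     D1 \<subseteq> E \<and> D2 \<subseteq> E \<and> D1 \<inter> D2 = {e}
     \<and> \<not> is_loop_restr E r D1 e \<and> \<not> is_coloop_restr E r D1 e
     \<and> \<not> is_loop_restr E r D2 e \<and> \<not> is_coloop_restr E r D2 e
     \<and> {C. restr_circuit E r (D1 \<union> D2) C} =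
         {C. restr_circuit E r D1 C} \<union> {C. restr_circuit E r D2 C}
         \<union> {(C1 \<union> C2) - {e} | C1 C2.
               restr_circuit E r D1 C1 \<and> e \<in> C1 \<and> restr_circuit E r D2 C2 \<and> e \<in> C2}"

definition cyclic :: "'a set \<Rightarrow> ('a set \<Rightarrow> nat) \<Rightarrow> 'a set \<Rightarrow> bool" where
  "cyclic E r D \<longleftrightarrow> (\<exists>S. (\<forall>C\<in>S. circuit E r C) \<and> \<Union>S = D)"

definition kfold_circuit :: "'a set \<Rightarrow> ('a set \<Rightarrow> nat) \<Rightarrow> nat \<Rightarrow> 'a set \<Rightarrow> bool" where
  "kfold_circuit E r k D \<longleftrightarrow> cyclic E r D \<and> r D + k = card D"

definition principal_partition :: "'a set \<Rightarrow> ('a set \<Rightarrow> nat) \<Rightarrow> 'a set \<Rightarrow> 'a set set \<Rightarrow> bool" where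
  "principal_partition E r D P \<longleftrightarrow>
     (\<exists>k. k \<ge> 1 \<and> kfold_circuit E r k D \<and> partition_on D P
        \<and> (\<lambda>A. D - A) ` P = {C. C \<subseteq> D \<and> kfold_circuit E r (k - 1) C})"

end

theory Submission
  imports Defs
begin

text \<open>
  Write n(X) = |X| - r(X) for the nullity, so that a k-fold circuit is a cyclic set of nullity k.
  Deleting an element of a circuit contained in X lowers n(X) by one, hence n strictly increases
  along proper inclusions into a cyclic set.

  In the parallel connection, bases of X1 and X2 containing e glue to an independent set, because
  a circuit meeting both sides has the form (C1 \<union> C2) - {e}. Hence
  r(X1 \<union> X2) = r(X1) + r(X2) - 1 and n(X1 \<union> X2) = n(X1) + n(X2) whenever e \<in> Xi \<subseteq> Di.
  Together with the fact that D is cyclic iff D1 and D2 are, this gives (a).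

  For (b), let C \<subseteq> D be a (k1 + k2 - 1)-fold circuit. If e \<notin> C, then C lies in the
  cyclic set D - {e} of the same nullity, so C = D - {e}.
  Otherwise additivity forces Dj \<subseteq> C for one side j and n(C \<inter> Di) = ki - 1 on the other.
  Either C \<inter> Di is cyclic, and then it is the complement in Di of a block of the partition
  of Di other than Ai; or e is a coloop of C \<inter> Di, and then C \<inter> Di - {e} is the complement of
  Ai, so that C is the complement of Ai - {e} in D.
\<close>

locale matroid_rank =
  fixes E :: "'a set" and r :: "'a set \<Rightarrow> nat"
  assumes matroid: "matroid E r"
begin

lemma finite_ground: "finite E"
  and rank_le_card: "X \<subseteq> E \<Longrightarrow> r X \<le> card X"
  and rank_mono: "X \<subseteq> Y \<Longrightarrow> Y \<subseteq> E \<Longrightarrow> r X \<le> r Y"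
  and rank_submodular: "X \<subseteq> E \<Longrightarrow> Y \<subseteq> E \<Longrightarrow> r (X \<union> Y) + r (X \<inter> Y) \<le> r X + r Y"
  using matroid unfolding matroid_def by blast+

lemma rank_empty: "r {} = 0"
  using rank_le_card[of "{}"] by simp

lemma finite_subset_ground: "X \<subseteq> E \<Longrightarrow> finite X"
  using finite_ground finite_subset by blast

definition nullity :: "'a set \<Rightarrow> int" where
  "nullity X = int (card X) - int (r X)"

lemma nullity_nonneg: "X \<subseteq> E \<Longrightarrow> 0 \<le> nullity X"
  using rank_le_card unfolding nullity_def by simp

lemma kfold_circuit_iff_nullity: "kfold_circuit E r k X \<longleftrightarrow> cyclic E r X \<and> nullity X = int k"
  unfolding kfold_circuit_def nullity_def by linarith

lemma rank_le_rank_add_card_Diff: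
  assumes "X \<subseteq> Y" "Y \<subseteq> E"
  shows "r Y \<le> r X + card (Y - X)"
proof -
  have "r (X \<union> (Y - X)) + r (X \<inter> (Y - X)) \<le> r X + r (Y - X)"
    using assms by (intro rank_submodular) auto
  moreover have "X \<union> (Y - X) = Y" "X \<inter> (Y - X) = {}"
    using assms by auto
  moreover have "r (Y - X) \<le> card (Y - X)"
    using assms by (intro rank_le_card) auto
  ultimately show ?thesis
    using rank_empty by simp
qed

lemma nullity_mono:
  assumes "X \<subseteq> Y" "Y \<subseteq> E"
  shows "nullity X \<le> nullity Y"
proof -
  have "finite Y"
    using assms finite_subset_ground by blast
  then have "card (Y - X) = card Y - card X" "card X \<le> card Y"
    using assms by (auto simp: card_Diff_subset finite_subset intro: card_mono)
  with rank_le_rank_add_card_Diff[OF assms] show ?thesis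
    unfolding nullity_def by linarith
qed

lemma indep_subset:
  assumes "indep E r Y" "X \<subseteq> Y"
  shows "indep E r X"
proof -
  have "Y \<subseteq> E" "nullity Y = 0"
    using assms unfolding indep_def nullity_def by auto
  moreover have "r X \<le> card X"
    using calculation assms(2) by (intro rank_le_card) auto
  ultimately show ?thesis
    using nullity_mono[OF assms(2)] assms(2) unfolding indep_def nullity_def by auto
qed

lemma indep_empty: "indep E r {}"
  unfolding indep_def using rank_empty by simp

lemma indep_singleton:
  assumes "x \<in> E" "\<not> circuit E r {x}"
  shows "indep E r {x}"
proof -
  have "indep E r Y" if "Y \<subset> {x}" for Y
    using that indep_empty by (metis subset_singletonD psubset_eq)
  then show ?thesis
    using assms unfolding circuit_def by blast
qed

lemma dependent_contains_circuit:
  "X \<subseteq> E \<Longrightarrow> \<not> indep E r X \<Longrightarrow> \<exists>C. C \<subseteq> X \<and> circuit E r C"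
proof (induction "card X" arbitrary: X rule: less_induct)
  case less
  show ?case
  proof (cases "\<forall>Y. Y \<subset> X \<longrightarrow> indep E r Y")
    case True
    then show ?thesis
      using less.prems unfolding circuit_def by blast
  next
    case False
    then obtain Y where Y: "Y \<subset> X" "\<not> indep E r Y"
      by blast
    have "finite X"
      using less.prems finite_subset_ground by blast
    then have "card Y < card X"
      using Y(1) psubset_card_mono by blast
    moreover have "Y \<subseteq> E"
      using Y less.prems by blast
    ultimately obtain C where "C \<subseteq> Y" "circuit E r C"
      using less.hyps Y(2) by blast
    then show ?thesis
      using Y by blast
  qed
qed

lemma rank_eq_card_maximal_indep:
  assumes B: "B \<subseteq> X" "X \<subseteq> E" "indep E r B"
    and maximal: "\<And>x. x \<in> X - B \<Longrightarrow> \<not> indep E r (insert x B)"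
  shows "r X = card B"
proof -
  have "finite X" "finite B"
    using B finite_subset_ground by auto
  have rank_insert: "r (insert x B) \<le> r B" if "x \<in> X - B" for x
  proof -
    have "insert x B \<subseteq> E"
      using B that by blast
    then have "r (insert x B) < card (insert x B)"
      using maximal[OF that] rank_le_card[of "insert x B"] unfolding indep_def by auto
    then show ?thesis
      using B(3) \<open>finite B\<close> that unfolding indep_def by simp
  qed
  have "r (B \<union> S) \<le> r B" if "finite S" "S \<subseteq> X - B" for S
    using that
  proof (induction S rule: finite_induct)
    case (insert x S)
    have "r ((B \<union> S) \<union> insert x B) + r ((B \<union> S) \<inter> insert x B) \<le> r (B \<union> S) + r (insert x B)"
      using insert.prems B by (intro rank_submodular) auto
    moreover have "(B \<union> S) \<union> insert x B = B \<union> insert x S" "(B \<union> S) \<inter> insert x B = B"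
      using insert.hyps(2) insert.prems by auto
    moreover have "r (insert x B) \<le> r B"
      using insert.prems by (intro rank_insert) simp
    moreover have "r (B \<union> S) \<le> r B"
      using insert.IH insert.prems by simp
    ultimately show ?case
      by simp
  qed simp
  then have "r (B \<union> (X - B)) \<le> r B"
    using \<open>finite X\<close> by blast
  moreover have "B \<union> (X - B) = X"
    using B(1) by blast
  moreover have "r B \<le> r X"
    using B rank_mono by blast
  ultimately show ?thesis
    using B(3) unfolding indep_def by simp
qed

lemma indep_extends_to_basis:
  assumes "indep E r J" "J \<subseteq> X" "X \<subseteq> E"
  obtains B where "J \<subseteq> B" "B \<subseteq> X" "indep E r B" "card B = r X"
proof -
  define F where "F = {I. J \<subseteq> I \<and> I \<subseteq> X \<and> indep E r I}"
  have "F \<subseteq> Pow X"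
    unfolding F_def by blast
  then have "finite F"
    using assms finite_subset_ground by (simp add: finite_subset)
  moreover have "J \<in> F"
    using assms unfolding F_def by blast
  ultimately have "Max (card ` F) \<in> card ` F"
    by (intro Max_in) auto
  then obtain B where "B \<in> F" "card B = Max (card ` F)"
    by auto
  then have B: "J \<subseteq> B" "B \<subseteq> X" "indep E r B"
    and B_max: "\<And>I. I \<in> F \<Longrightarrow> card I \<le> card B"
    using \<open>finite F\<close> unfolding F_def by auto
  have "\<not> indep E r (insert x B)" if "x \<in> X - B" for x
    using B_max[of "insert x B"] B that finite_subset_ground[of B] assms(3) unfolding F_def by auto
  then have "r X = card B"
    using B assms(3) by (intro rank_eq_card_maximal_indep) auto
  then show ?thesis
    using that B by simp
qed

lemma circuit_subset_ground: "circuit E r C \<Longrightarrow> C \<subseteq> E"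
  unfolding circuit_def by blast

lemma cyclic_iff: "cyclic E r D \<longleftrightarrow> (\<forall>x\<in>D. \<exists>C. circuit E r C \<and> C \<subseteq> D \<and> x \<in> C)"
  unfolding cyclic_def by (rule iffI, blast, rule exI[of _ "{C. circuit E r C \<and> C \<subseteq> D}"], blast)

lemma cyclic_subset_ground: "cyclic E r D \<Longrightarrow> D \<subseteq> E"
  using cyclic_iff circuit_subset_ground by blast

lemma cyclic_Un: "cyclic E r X \<Longrightarrow> cyclic E r Y \<Longrightarrow> cyclic E r (X \<union> Y)"
  unfolding cyclic_iff by blast

lemma rank_Diff_circuit_elem:
  assumes "circuit E r C" "C \<subseteq> D" "x \<in> C" "D \<subseteq> E"
  shows "r (D - {x}) = r D"
proof -
  have "C \<subseteq> E" "finite C"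
    using assms circuit_subset_ground finite_subset_ground by blast+
  moreover have "indep E r (C - {x})" "r C \<noteq> card C"
    using assms calculation unfolding circuit_def indep_def by blast+
  ultimately have rank_C: "r C \<le> r (C - {x})"
    using assms(3) rank_le_card[of C] unfolding indep_def by (simp add: card_Diff_singleton)
  have "r ((D - {x}) \<union> C) + r ((D - {x}) \<inter> C) \<le> r (D - {x}) + r C"
    using assms \<open>C \<subseteq> E\<close> by (intro rank_submodular) auto
  moreover have "(D - {x}) \<union> C = D" "(D - {x}) \<inter> C = C - {x}"
    using assms by auto
  ultimately have "r D + r (C - {x}) \<le> r (D - {x}) + r C"
    by simp
  moreover have "r (D - {x}) \<le> r D"
    using assms by (intro rank_mono) auto
  ultimately show ?thesis
    using rank_C by linarith
qed

lemma int_card_Diff_singleton: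
  assumes "X \<subseteq> E" "x \<in> X"
  shows "int (card (X - {x})) = int (card X) - 1"
  using card_Suc_Diff1[OF finite_subset_ground[OF assms(1)] assms(2)] by simp

lemma nullity_Diff_circuit_elem:
  assumes "circuit E r C" "C \<subseteq> D" "x \<in> C" "D \<subseteq> E"
  shows "nullity (D - {x}) = nullity D - 1"
  using rank_Diff_circuit_elem[OF assms] int_card_Diff_singleton[of D x] assms
  unfolding nullity_def by auto

lemma nullity_psubset_cyclic:
  assumes "cyclic E r D" "X \<subset> D"
  shows "nullity X < nullity D"
proof -
  obtain x where x: "x \<in> D" "x \<notin> X"
    using assms by blast
  then obtain C where "circuit E r C" "C \<subseteq> D" "x \<in> C"
    using assms(1) cyclic_iff by blast
  moreover have "D \<subseteq> E"
    using assms(1) cyclic_subset_ground by blast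
  ultimately have "nullity (D - {x}) = nullity D - 1"
    by (rule nullity_Diff_circuit_elem)
  moreover have "nullity X \<le> nullity (D - {x})"
    using assms x \<open>D \<subseteq> E\<close> by (intro nullity_mono) auto
  ultimately show ?thesis
    by linarith
qed

lemma subset_cyclic_eqI:
  assumes "cyclic E r D" "X \<subseteq> D" "nullity D \<le> nullity X"
  shows "X = D"
proof (rule ccontr)
  assume "X \<noteq> D"
  with assms(2) have "nullity X < nullity D"
    by (intro nullity_psubset_cyclic[OF assms(1)]) blast
  with assms(3) show False
    by linarith
qed

lemma rank_Diff_coloop:
  assumes "X \<subseteq> E" "x \<in> X" "\<nexists>C. circuit E r C \<and> C \<subseteq> X \<and> x \<in> C"
  shows "r X = r (X - {x}) + 1"
proof -
  obtain B where B: "B \<subseteq> X - {x}" "indep E r B" "card B = r (X - {x})"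
    using indep_extends_to_basis[OF indep_empty, of "X - {x}"] assms by auto
  have "indep E r (insert x B)"
  proof (rule ccontr)
    assume "\<not> indep E r (insert x B)"
    moreover have "insert x B \<subseteq> E"
      using assms B by auto
    ultimately obtain C where C: "C \<subseteq> insert x B" "circuit E r C"
      using dependent_contains_circuit by blast
    then have "x \<notin> C"
      using assms B by blast
    then have "indep E r C"
      using C B indep_subset by blast
    then show False
      using C unfolding circuit_def by blast
  qed
  moreover have "finite B" "x \<notin> B"
    using B assms finite_subset_ground[of B] by auto
  moreover have "r (insert x B) \<le> r X"
    using B assms by (intro rank_mono) auto
  moreover have "r X \<le> r (X - {x}) + card (X - (X - {x}))"
    using assms by (intro rank_le_rank_add_card_Diff) auto
  moreover have "X - (X - {x}) = {x}"
    using assms by auto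
  ultimately show ?thesis
    using B unfolding indep_def by simp
qed

lemma nullity_Diff_coloop:
  assumes "X \<subseteq> E" "x \<in> X" "\<nexists>C. circuit E r C \<and> C \<subseteq> X \<and> x \<in> C"
  shows "nullity (X - {x}) = nullity X"
  using rank_Diff_coloop[OF assms] int_card_Diff_singleton[OF assms(1,2)]
  unfolding nullity_def by auto

lemma principal_partition_kfold_circuit:
  assumes "principal_partition E r D P" "kfold_circuit E r k D"
  shows "1 \<le> k" "partition_on D P" "(\<lambda>A. D - A) ` P = {C. C \<subseteq> D \<and> kfold_circuit E r (k - 1) C}"
proof -
  obtain k' where "1 \<le> k'" "kfold_circuit E r k' D" "partition_on D P"
    "(\<lambda>A. D - A) ` P = {C. C \<subseteq> D \<and> kfold_circuit E r (k' - 1) C}"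
    using assms(1) unfolding principal_partition_def by blast
  moreover have "k' = k"
    using calculation(2) assms(2) unfolding kfold_circuit_def by simp
  ultimately show "1 \<le> k" "partition_on D P" "(\<lambda>A. D - A) ` P = {C. C \<subseteq> D \<and> kfold_circuit E r (k - 1) C}"
    by simp_all
qed

end

lemma parallel_connection_restr_swap:
  assumes "parallel_connection_restr E r D1 D2 e"
  shows "parallel_connection_restr E r D2 D1 e"
proof -
  let ?through_e = "\<lambda>D C. restr_circuit E r D C \<and> e \<in> C"
  have "{(C1 \<union> C2) - {e} | C1 C2. ?through_e D2 C1 \<and> ?through_e D1 C2}
      = {(C1 \<union> C2) - {e} | C1 C2. ?through_e D1 C1 \<and> ?through_e D2 C2}"
    by (auto simp: Un_commute)
  then have "{C. restr_circuit E r (D2 \<union> D1) C} =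
      {C. restr_circuit E r D2 C} \<union> {C. restr_circuit E r D1 C}
      \<union> {(C1 \<union> C2) - {e} | C1 C2. ?through_e D2 C1 \<and> ?through_e D1 C2}"
    using assms unfolding parallel_connection_restr_def by (simp add: Un_ac)
  with assms show ?thesis
    unfolding parallel_connection_restr_def by (simp add: Int_commute)
qed

locale parallel_connection = matroid_rank +
  fixes D1 D2 :: "'a set" and e :: 'a
  assumes parallel: "parallel_connection_restr E r D1 D2 e"
begin

lemma sides_subset_ground: "D1 \<subseteq> E" "D2 \<subseteq> E"
  and sides_Int: "D1 \<inter> D2 = {e}"
  and e_not_loop: "\<not> is_loop_restr E r D1 e"
  and e_not_coloop: "\<not> is_coloop_restr E r D1 e"
  using parallel unfolding parallel_connection_restr_def by auto

lemma circuits_Un: "{C. restr_circuit E r (D1 \<union> D2) C} =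
    {C. restr_circuit E r D1 C} \<union> {C. restr_circuit E r D2 C}
    \<union> {(C1 \<union> C2) - {e} | C1 C2.
          restr_circuit E r D1 C1 \<and> e \<in> C1 \<and> restr_circuit E r D2 C2 \<and> e \<in> C2}"
  using parallel unfolding parallel_connection_restr_def by (elim conjE) assumption

lemma e_in_sides: "e \<in> D1" "e \<in> D2"
  using sides_Int by auto

lemma parallel_connection_swap: "parallel_connection E r D2 D1 e"
  using parallel_connection_restr_swap[OF parallel] by unfold_locales

lemma circuit_cases:
  assumes "circuit E r C" "C \<subseteq> D1 \<union> D2"
  obtains "C \<subseteq> D1" | "C \<subseteq> D2"
  | C1 C2 where "circuit E r C1" "C1 \<subseteq> D1" "e \<in> C1" "circuit E r C2" "C2 \<subseteq> D2" "e \<in> C2"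
      "C = (C1 \<union> C2) - {e}"
proof -
  have "C \<in> {C. restr_circuit E r (D1 \<union> D2) C}"
    using assms unfolding restr_circuit_def by blast
  then show ?thesis
    using that unfolding circuits_Un unfolding restr_circuit_def by blast
qed

lemma circuit_glue:
  assumes "circuit E r C1" "C1 \<subseteq> D1" "e \<in> C1" "circuit E r C2" "C2 \<subseteq> D2" "e \<in> C2"
  shows "circuit E r ((C1 \<union> C2) - {e})"
proof -
  have "(C1 \<union> C2) - {e} \<in> {C. restr_circuit E r (D1 \<union> D2) C}"
    unfolding circuits_Un unfolding restr_circuit_def using assms by blast
  then show ?thesis
    unfolding restr_circuit_def by blast
qed

lemma exists_circuit_through_e: "\<exists>C. circuit E r C \<and> C \<subseteq> D1 \<and> e \<in> C"
  using e_not_coloop e_in_sides unfolding is_coloop_restr_def restr_circuit_def by blast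

lemma indep_e: "indep E r {e}"
  using e_not_loop e_in_sides sides_subset_ground
  by (intro indep_singleton) (auto simp: is_loop_restr_def restr_circuit_def)

lemma indep_Un_sides:
  assumes B1: "indep E r B1" "B1 \<subseteq> D1" "e \<in> B1" and B2: "indep E r B2" "B2 \<subseteq> D2" "e \<in> B2"
  shows "indep E r (B1 \<union> B2)"
proof (rule ccontr)
  assume "\<not> indep E r (B1 \<union> B2)"
  moreover have "B1 \<union> B2 \<subseteq> E"
    using assms sides_subset_ground by auto
  ultimately obtain C where C: "C \<subseteq> B1 \<union> B2" "circuit E r C"
    using dependent_contains_circuit by blast
  have B2_D1: "B2 \<inter> D1 \<subseteq> B1" and B1_D2: "B1 \<inter> D2 \<subseteq> B2"
    using assms sides_Int by auto
  have "C \<subseteq> D1 \<union> D2"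
    using C(1) B1(2) B2(2) by blast
  then show False
  proof (rule circuit_cases[OF C(2)])
    assume "C \<subseteq> D1"
    then have "C \<subseteq> B1"
      using C(1) B2_D1 by blast
    then show False
      using C(2) indep_subset[OF B1(1)] unfolding circuit_def by blast
  next
    assume "C \<subseteq> D2"
    then have "C \<subseteq> B2"
      using C(1) B1_D2 by blast
    then show False
      using C(2) indep_subset[OF B2(1)] unfolding circuit_def by blast
  next
    fix C1 C2
    assume C1: "circuit E r C1" "C1 \<subseteq> D1" "e \<in> C1"
      and "C = (C1 \<union> C2) - {e}"
    then have "C1 - {e} \<subseteq> B1"
      using C(1) B2_D1 by blast
    then have "C1 \<subseteq> B1"
      using B1(3) by blast
    then show False
      using C1(1) indep_subset[OF B1(1)] unfolding circuit_def by blast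
  qed
qed

lemma rank_parallel_connection:
  assumes X: "e \<in> X1" "X1 \<subseteq> D1" "e \<in> X2" "X2 \<subseteq> D2"
  shows "r (X1 \<union> X2) + 1 = r X1 + r X2"
proof -
  have XE: "X1 \<subseteq> E" "X2 \<subseteq> E" and X_Int: "X1 \<inter> X2 = {e}"
    using X sides_subset_ground sides_Int by auto
  have "r (X1 \<union> X2) + r {e} \<le> r X1 + r X2"
    using rank_submodular[OF XE] X_Int by simp
  moreover have "r {e} = 1"
    using indep_e unfolding indep_def by simp
  moreover obtain B1 where B1: "e \<in> B1" "B1 \<subseteq> X1" "indep E r B1" "card B1 = r X1"
    using indep_extends_to_basis[OF indep_e, of X1] X XE by auto
  moreover obtain B2 where B2: "e \<in> B2" "B2 \<subseteq> X2" "indep E r B2" "card B2 = r X2"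
    using indep_extends_to_basis[OF indep_e, of X2] X XE by auto
  moreover have "card (B1 \<union> B2) + 1 = card B1 + card B2"
  proof -
    have "B1 \<inter> B2 = {e}"
      using B1 B2 X_Int by blast
    then show ?thesis
      using card_Un_Int[of B1 B2] B1 B2 XE finite_subset_ground[of B1] finite_subset_ground[of B2] by auto
  qed
  moreover have "card (B1 \<union> B2) \<le> r (X1 \<union> X2)"
    using indep_Un_sides[of B1 B2] B1 B2 X rank_mono[of "B1 \<union> B2" "X1 \<union> X2"] XE
    unfolding indep_def by auto
  ultimately show ?thesis
    by linarith
qed

lemma nullity_parallel_connection:
  assumes "e \<in> X1" "X1 \<subseteq> D1" "e \<in> X2" "X2 \<subseteq> D2"
  shows "nullity (X1 \<union> X2) = nullity X1 + nullity X2"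
proof -
  have "X1 \<inter> X2 = {e}" "finite X1" "finite X2"
    using assms sides_Int sides_subset_ground finite_subset_ground by auto
  then have "card (X1 \<union> X2) + 1 = card X1 + card X2"
    using card_Un_Int[of X1 X2] by simp
  then show ?thesis
    using rank_parallel_connection[OF assms] unfolding nullity_def by linarith
qed

lemma circuit_within_side:
  assumes "cyclic E r C" "C \<subseteq> D1 \<union> D2" "e \<in> C" "x \<in> C \<inter> D1" "x \<noteq> e"
  obtains Z where "circuit E r Z" "Z \<subseteq> C \<inter> D1" "x \<in> Z"
proof -
  obtain Z where Z: "circuit E r Z" "Z \<subseteq> C" "x \<in> Z"
    using assms cyclic_iff by blast
  then have "Z \<subseteq> D1 \<union> D2"
    using assms by blast
  then show ?thesis
  proof (rule circuit_cases[OF Z(1)])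
    assume "Z \<subseteq> D1"
    then show ?thesis
      using that Z by blast
  next
    assume "Z \<subseteq> D2"
    then show ?thesis
      using Z assms sides_Int by blast
  next
    fix Z1 Z2
    assume "circuit E r Z1" "Z1 \<subseteq> D1" "Z2 \<subseteq> D2" "Z = (Z1 \<union> Z2) - {e}"
    then show ?thesis
      using that[of Z1] Z assms sides_Int by blast
  qed
qed

lemma cyclic_Int_side_cases:
  assumes "cyclic E r C" "C \<subseteq> D1 \<union> D2" "e \<in> C"
  shows "cyclic E r (C \<inter> D1)
    \<or> cyclic E r (C \<inter> D1 - {e}) \<and> nullity (C \<inter> D1 - {e}) = nullity (C \<inter> D1)"
proof (cases "\<exists>Z. circuit E r Z \<and> Z \<subseteq> C \<inter> D1 \<and> e \<in> Z")
  case True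
  have "cyclic E r (C \<inter> D1)"
    unfolding cyclic_iff
  proof
    fix x
    assume x: "x \<in> C \<inter> D1"
    show "\<exists>Z. circuit E r Z \<and> Z \<subseteq> C \<inter> D1 \<and> x \<in> Z"
    proof (cases "x = e")
      case False
      obtain Z where "circuit E r Z" "Z \<subseteq> C \<inter> D1" "x \<in> Z"
        by (rule circuit_within_side[OF assms x False])
      then show ?thesis
        by blast
    qed (use True in blast)
  qed
  then show ?thesis ..
next
  case False
  have "cyclic E r (C \<inter> D1 - {e})"
    unfolding cyclic_iff
  proof
    fix x
    assume x: "x \<in> C \<inter> D1 - {e}"
    obtain Z where "circuit E r Z" "Z \<subseteq> C \<inter> D1" "x \<in> Z"
      by (rule circuit_within_side[OF assms]) (use x in auto)
    then show "\<exists>Z. circuit E r Z \<and> Z \<subseteq> C \<inter> D1 - {e} \<and> x \<in> Z"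
      using False by blast
  qed
  moreover have "nullity (C \<inter> D1 - {e}) = nullity (C \<inter> D1)"
    using False assms(3) e_in_sides sides_subset_ground by (intro nullity_Diff_coloop) auto
  ultimately show ?thesis
    by blast
qed

lemma cyclic_side_if_cyclic_Un:
  assumes "cyclic E r (D1 \<union> D2)"
  shows "cyclic E r D1"
  unfolding cyclic_iff
proof
  fix x
  assume x: "x \<in> D1"
  show "\<exists>C. circuit E r C \<and> C \<subseteq> D1 \<and> x \<in> C"
  proof (cases "x = e")
    case False
    obtain Z where "circuit E r Z" "Z \<subseteq> (D1 \<union> D2) \<inter> D1" "x \<in> Z"
      by (rule circuit_within_side[OF assms subset_refl _ _ False]) (use x e_in_sides in auto)
    then show ?thesis
      by blast
  qed (use exists_circuit_through_e in blast)
qed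

lemma circuit_avoiding_e:
  assumes "cyclic E r D1" "x \<in> D1" "x \<noteq> e"
  shows "\<exists>C. circuit E r C \<and> C \<subseteq> (D1 \<union> D2) - {e} \<and> x \<in> C"
proof -
  interpret swap: parallel_connection E r D2 D1 e
    by (rule parallel_connection_swap)
  obtain Z where Z: "circuit E r Z" "Z \<subseteq> D1" "x \<in> Z"
    using assms cyclic_iff by blast
  show ?thesis
  proof (cases "e \<in> Z")
    case True
    obtain W where "circuit E r W" "W \<subseteq> D2" "e \<in> W"
      using swap.exists_circuit_through_e by blast
    then show ?thesis
      using circuit_glue[OF Z(1,2) True] Z assms by blast
  next
    case False
    then show ?thesis
      using Z by blast
  qed
qed

lemma cyclic_Diff_e:
  assumes "cyclic E r D1" "cyclic E r D2"
  shows "cyclic E r ((D1 \<union> D2) - {e})"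
proof -
  interpret swap: parallel_connection E r D2 D1 e
    by (rule parallel_connection_swap)
  show ?thesis
    unfolding cyclic_iff
    using circuit_avoiding_e[OF assms(1)] swap.circuit_avoiding_e[OF assms(2)] by (auto simp: Un_commute)
qed

lemma cyclic_Un_iff: "cyclic E r (D1 \<union> D2) \<longleftrightarrow> cyclic E r D1 \<and> cyclic E r D2"
proof -
  interpret swap: parallel_connection E r D2 D1 e
    by (rule parallel_connection_swap)
  have "cyclic E r D2" if "cyclic E r (D1 \<union> D2)"
    using swap.cyclic_side_if_cyclic_Un that by (simp add: Un_commute)
  then show ?thesis
    using cyclic_side_if_cyclic_Un cyclic_Un by blast
qed

lemma kfold_circuit_Un_iff:
  "kfold_circuit E r k (D1 \<union> D2) \<longleftrightarrow>
    (\<exists>k1 k2. kfold_circuit E r k1 D1 \<and> kfold_circuit E r k2 D2 \<and> k = k1 + k2)"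
  (is "_ \<longleftrightarrow> ?split")
proof -
  have nullity_Un: "nullity (D1 \<union> D2) = nullity D1 + nullity D2"
    using nullity_parallel_connection e_in_sides by blast
  have "0 \<le> nullity D1" "0 \<le> nullity D2"
    using nullity_nonneg sides_subset_ground by auto
  show ?thesis
  proof
    assume "kfold_circuit E r k (D1 \<union> D2)"
    then have "cyclic E r D1" "cyclic E r D2" "int k = nullity D1 + nullity D2"
      unfolding kfold_circuit_iff_nullity cyclic_Un_iff nullity_Un by auto
    then show ?split
      using \<open>0 \<le> nullity D1\<close> \<open>0 \<le> nullity D2\<close> unfolding kfold_circuit_iff_nullity
      by (intro exI[of _ "nat (nullity D1)"] exI[of _ "nat (nullity D2)"]) auto
  next
    assume ?split
    then show "kfold_circuit E r k (D1 \<union> D2)"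
      unfolding kfold_circuit_iff_nullity cyclic_Un_iff nullity_Un by auto
  qed
qed

end

definition glue_partitions :: "'a \<Rightarrow> 'a set set \<Rightarrow> 'a set \<Rightarrow> 'a set set \<Rightarrow> 'a set \<Rightarrow> 'a set set" where
  "glue_partitions e P1 A1 P2 A2 = ((P1 - {A1}) \<union> (P2 - {A2}) \<union> {A1 - {e}, A2 - {e}, {e}}) - {{}}"

lemma glue_partitions_swap: "glue_partitions e P2 A2 P1 A1 = glue_partitions e P1 A1 P2 A2"
  unfolding glue_partitions_def by blast

lemma partition_on_Un:
  assumes "partition_on A P" "partition_on B Q" "A \<inter> B = {}"
  shows "partition_on (A \<union> B) (P \<union> Q)"
  using assms by (auto simp: partition_on_def intro: disjoint_union)

lemma partition_on_Diff_elem: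
  assumes "partition_on D P"
  shows "partition_on (D - {e}) ((\<lambda>A. A - {e}) ` P - {{}})"
  using partition_on_restrict[OF assms, of "- {e}"] by (simp add: Diff_eq Int_commute inf_commute)

lemma image_Diff_elem_partition:
  assumes "partition_on D P" "A0 \<in> P" "e \<in> A0"
  shows "(\<lambda>A. A - {e}) ` P = insert (A0 - {e}) (P - {A0})"
proof -
  have "A - {e} = A" if "A \<in> P - {A0}" for A
    using disjointD[OF partition_onD2[OF assms(1)], of A A0] assms that by blast
  then have "(\<lambda>A. A - {e}) ` (P - {A0}) = id ` (P - {A0})"
    by (intro image_cong) simp_all
  then have rest: "(\<lambda>A. A - {e}) ` (P - {A0}) = P - {A0}"
    by simp
  have "(\<lambda>A. A - {e}) ` P = (\<lambda>A. A - {e}) ` insert A0 (P - {A0})"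
    using assms(2) by (simp add: insert_absorb)
  also have "\<dots> = insert (A0 - {e}) (P - {A0})"
    by (simp only: image_insert rest)
  finally show ?thesis .
qed

lemma partition_on_glue_partitions:
  assumes P1: "partition_on D1 P1" "A1 \<in> P1" "e \<in> A1"
    and P2: "partition_on D2 P2" "A2 \<in> P2" "e \<in> A2"
    and "D1 \<inter> D2 = {e}"
  shows "partition_on (D1 \<union> D2) (glue_partitions e P1 A1 P2 A2)"
proof -
  let ?Q = "((\<lambda>A. A - {e}) ` P1 - {{}}) \<union> ((\<lambda>A. A - {e}) ` P2 - {{}})"
  have "glue_partitions e P1 A1 P2 A2 = insert {e} ?Q"
    unfolding glue_partitions_def image_Diff_elem_partition[OF P1] image_Diff_elem_partition[OF P2]
    by blast
  moreover have "partition_on (D1 \<union> D2) (insert {e} ?Q)"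
  proof (rule partition_on_insert[THEN iffD2])
    show "disjnt {e} (\<Union>?Q)"
      by (auto simp: disjnt_def)
    have "partition_on ((D1 - {e}) \<union> (D2 - {e})) ?Q"
      using assms(7) by (intro partition_on_Un partition_on_Diff_elem P1(1) P2(1)) auto
    moreover have "(D1 - {e}) \<union> (D2 - {e}) = (D1 \<union> D2) - {e}" "e \<in> D1 \<union> D2"
      using assms(7) by auto
    ultimately show "partition_on ((D1 \<union> D2) - {e}) ?Q \<and> {e} \<subseteq> D1 \<union> D2 \<and> {e} \<noteq> {}"
      by simp
  qed
  ultimately show ?thesis
    by simp
qed

locale parallel_connection_principal_partitions = parallel_connection +
  fixes k1 k2 :: nat and P1 P2 :: "'a set set" and A1 A2 :: "'a set"
  assumes kfold1: "kfold_circuit E r k1 D1" and kfold2: "kfold_circuit E r k2 D2"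
    and principal1: "principal_partition E r D1 P1" and principal2: "principal_partition E r D2 P2"
    and A1: "A1 \<in> P1" "e \<in> A1" and A2: "A2 \<in> P2" "e \<in> A2"
begin

lemma parallel_connection_principal_partitions_swap:
  "parallel_connection_principal_partitions E r D2 D1 e k2 k1 P2 P1 A2 A1"
  using parallel_connection_swap kfold1 kfold2 principal1 principal2 A1 A2
  unfolding parallel_connection_principal_partitions_def parallel_connection_principal_partitions_axioms_def
  by blast

lemma k1_pos: "1 \<le> k1"
  and partition1: "partition_on D1 P1"
  and complements1: "(\<lambda>A. D1 - A) ` P1 = {C. C \<subseteq> D1 \<and> kfold_circuit E r (k1 - 1) C}"
  using principal_partition_kfold_circuit[OF principal1 kfold1] by simp_all

lemma cyclic1: "cyclic E r D1" and nullity1: "nullity D1 = int k1"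
  using kfold1 kfold_circuit_iff_nullity by auto

lemma block_subset: "A \<in> P1 \<Longrightarrow> A \<subseteq> D1"
  using partition1 partition_onD1 by blast

lemma block_nonempty: "A \<in> P1 \<Longrightarrow> A \<noteq> {}"
  using partition1 partition_onD3 by blast

lemma block_Int_side2: "A \<in> P1 \<Longrightarrow> A \<inter> D2 \<subseteq> {e}"
  using block_subset sides_Int by blast

lemma block_eq_A1_iff: "A \<in> P1 \<Longrightarrow> A = A1 \<longleftrightarrow> e \<in> A"
  using partition1 A1 unfolding partition_on_def pairwise_def disjnt_def by blast

lemma complement_block_cyclic_nullity:
  assumes "A \<in> P1"
  shows "cyclic E r (D1 - A)" "nullity (D1 - A) = int k1 - 1"
  using complements1 assms k1_pos kfold_circuit_iff_nullity by auto

lemma eq_complement_blockE: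
  assumes "X \<subseteq> D1" "cyclic E r X" "nullity X = int k1 - 1"
  obtains A where "A \<in> P1" "X = D1 - A"
proof -
  have "kfold_circuit E r (k1 - 1) X"
    using assms k1_pos kfold_circuit_iff_nullity by auto
  then show ?thesis
    using that assms(1) complements1 by blast
qed

lemma kfold_Diff_block:
  assumes "A \<in> P1" "A \<noteq> A1"
  shows "kfold_circuit E r (k1 + k2 - 1) ((D1 \<union> D2) - A)"
proof -
  interpret swap: parallel_connection_principal_partitions E r D2 D1 e k2 k1 P2 P1 A2 A1
    by (rule parallel_connection_principal_partitions_swap)
  have "e \<notin> A"
    using assms block_eq_A1_iff by blast
  then have "(D1 \<union> D2) - A = (D1 - A) \<union> D2"
    using assms block_Int_side2 by blast
  moreover have "nullity ((D1 - A) \<union> D2) = nullity (D1 - A) + nullity D2"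
    using \<open>e \<notin> A\<close> e_in_sides by (intro nullity_parallel_connection) auto
  ultimately show ?thesis
    using complement_block_cyclic_nullity[OF assms(1)] swap.cyclic1 swap.nullity1 k1_pos cyclic_Un
    unfolding kfold_circuit_iff_nullity by auto
qed

lemma kfold_Diff_block_minus_e:
  assumes "A1 - {e} \<noteq> {}"
  shows "kfold_circuit E r (k1 + k2 - 1) ((D1 \<union> D2) - (A1 - {e}))"
proof -
  interpret swap: parallel_connection_principal_partitions E r D2 D1 e k2 k1 P2 P1 A2 A1
    by (rule parallel_connection_principal_partitions_swap)
  define X where "X = insert e (D1 - A1)"
  have "X \<subset> D1"
    using assms e_in_sides block_subset[OF A1(1)] unfolding X_def by blast
  then have "nullity X < int k1"
    using nullity_psubset_cyclic[OF cyclic1] nullity1 by simp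
  moreover have "nullity (D1 - A1) \<le> nullity X"
    unfolding X_def using sides_subset_ground e_in_sides by (intro nullity_mono) auto
  ultimately have "nullity X = int k1 - 1"
    using complement_block_cyclic_nullity[OF A1(1)] by linarith
  moreover have "nullity (X \<union> D2) = nullity X + nullity D2"
    using \<open>X \<subset> D1\<close> e_in_sides by (intro nullity_parallel_connection) (auto simp: X_def)
  moreover have "(D1 \<union> D2) - (A1 - {e}) = X \<union> D2" "X \<union> D2 = (D1 - A1) \<union> D2"
    unfolding X_def using block_Int_side2[OF A1(1)] e_in_sides by auto
  moreover have "cyclic E r ((D1 - A1) \<union> D2)"
    using complement_block_cyclic_nullity(1)[OF A1(1)] swap.cyclic1 by (rule cyclic_Un)
  ultimately show ?thesis
    using swap.nullity1 k1_pos unfolding kfold_circuit_iff_nullity by simp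
qed

lemma kfold_Diff_e: "kfold_circuit E r (k1 + k2 - 1) ((D1 \<union> D2) - {e})"
proof -
  interpret swap: parallel_connection_principal_partitions E r D2 D1 e k2 k1 P2 P1 A2 A1
    by (rule parallel_connection_principal_partitions_swap)
  obtain C where "circuit E r C" "C \<subseteq> D1" "e \<in> C"
    using exists_circuit_through_e by blast
  then have "nullity ((D1 \<union> D2) - {e}) = nullity (D1 \<union> D2) - 1"
    using sides_subset_ground by (intro nullity_Diff_circuit_elem) auto
  moreover have "nullity (D1 \<union> D2) = nullity D1 + nullity D2"
    using e_in_sides by (intro nullity_parallel_connection) auto
  ultimately show ?thesis
    using cyclic_Diff_e cyclic1 swap.cyclic1 nullity1 swap.nullity1 k1_pos
    unfolding kfold_circuit_iff_nullity by auto
qed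

lemma kfold_Diff_glued_block:
  assumes "A \<in> glue_partitions e P1 A1 P2 A2"
  shows "kfold_circuit E r (k1 + k2 - 1) ((D1 \<union> D2) - A)"
proof -
  interpret swap: parallel_connection_principal_partitions E r D2 D1 e k2 k1 P2 P1 A2 A1
    by (rule parallel_connection_principal_partitions_swap)
  have swap_eq: "(D2 \<union> D1) - A = (D1 \<union> D2) - A" "k2 + k1 = k1 + k2"
    by auto
  from assms consider "A \<in> P1" "A \<noteq> A1" | "A \<in> P2" "A \<noteq> A2"
    | "A = A1 - {e}" "A \<noteq> {}" | "A = A2 - {e}" "A \<noteq> {}" | "A = {e}"
    unfolding glue_partitions_def by blast
  then show ?thesis
  proof cases
    case 1
    then show ?thesis
      by (rule kfold_Diff_block)
  next
    case 2
    then show ?thesis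
      using swap.kfold_Diff_block swap_eq by metis
  next
    case 3
    then show ?thesis
      using kfold_Diff_block_minus_e by blast
  next
    case 4
    then show ?thesis
      using swap.kfold_Diff_block_minus_e swap_eq by metis
  next
    case 5
    then show ?thesis
      using kfold_Diff_e by blast
  qed
qed

lemma glued_block_if_kfold_containing_side2:
  assumes C: "C \<subseteq> D1 \<union> D2" "cyclic E r C" "e \<in> C" "C \<noteq> D1 \<union> D2"
    and "D2 \<subseteq> C" "nullity (C \<inter> D1) = int k1 - 1"
  shows "\<exists>A \<in> glue_partitions e P1 A1 P2 A2. C = (D1 \<union> D2) - A"
proof -
  have C_eq: "C = (C \<inter> D1) \<union> D2"
    using assms by blast
  from cyclic_Int_side_cases[OF C(2,1,3)] show ?thesis
  proof
    assume "cyclic E r (C \<inter> D1)"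
    then obtain A where A: "A \<in> P1" "C \<inter> D1 = D1 - A"
      using eq_complement_blockE assms by blast
    then have "e \<notin> A"
      using C(3) e_in_sides by blast
    have "A \<inter> D2 = {}"
      using block_Int_side2[OF A(1)] \<open>e \<notin> A\<close> by blast
    then have "C = (D1 \<union> D2) - A"
      using A(2) C_eq by blast
    moreover have "A \<in> glue_partitions e P1 A1 P2 A2"
      using A(1) \<open>e \<notin> A\<close> block_nonempty block_eq_A1_iff unfolding glue_partitions_def by blast
    ultimately show ?thesis
      by blast
  next
    assume "cyclic E r (C \<inter> D1 - {e}) \<and> nullity (C \<inter> D1 - {e}) = nullity (C \<inter> D1)"
    then obtain A where A: "A \<in> P1" "C \<inter> D1 - {e} = D1 - A"
      using eq_complement_blockE[of "C \<inter> D1 - {e}"] assms by auto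
    then have "A = A1"
      using block_eq_A1_iff e_in_sides by blast
    then have "C = (D1 \<union> D2) - (A1 - {e})"
      using A C_eq block_Int_side2[OF A1(1)] e_in_sides by blast
    moreover have "A1 - {e} \<noteq> {}"
      using calculation C(4) by auto
    ultimately show ?thesis
      unfolding glue_partitions_def by blast
  qed
qed

lemma eq_Diff_e_if_kfold:
  assumes "C \<subseteq> D1 \<union> D2" "kfold_circuit E r (k1 + k2 - 1) C" "e \<notin> C"
  shows "C = (D1 \<union> D2) - {e}"
proof (rule subset_cyclic_eqI)
  show "cyclic E r ((D1 \<union> D2) - {e})" "C \<subseteq> (D1 \<union> D2) - {e}"
    using kfold_Diff_e assms(1,3) kfold_circuit_iff_nullity by auto
  show "nullity ((D1 \<union> D2) - {e}) \<le> nullity C"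
    using kfold_Diff_e assms(2) kfold_circuit_iff_nullity by simp
qed

lemma side_subset_if_nullity_drop:
  assumes "C \<subseteq> D1 \<union> D2" "e \<in> C" "nullity C = int k1 + int k2 - 1"
  shows "D2 \<subseteq> C \<and> nullity (C \<inter> D1) = int k1 - 1 \<or> D1 \<subseteq> C \<and> nullity (C \<inter> D2) = int k2 - 1"
proof -
  interpret swap: parallel_connection_principal_partitions E r D2 D1 e k2 k1 P2 P1 A2 A1
    by (rule parallel_connection_principal_partitions_swap)
  have "C = (C \<inter> D1) \<union> (C \<inter> D2)"
    using assms(1) by blast
  then have "nullity C = nullity (C \<inter> D1) + nullity (C \<inter> D2)"
    using nullity_parallel_connection[of "C \<inter> D1" "C \<inter> D2"] assms(2) e_in_sides by simp
  moreover have "nullity (C \<inter> D1) \<le> int k1" "nullity (C \<inter> D2) \<le> int k2"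
    using nullity_mono nullity1 swap.nullity1 sides_subset_ground by (metis inf_le2)+
  ultimately consider "nullity (C \<inter> D1) = int k1 - 1" "nullity (C \<inter> D2) = int k2"
    | "nullity (C \<inter> D2) = int k2 - 1" "nullity (C \<inter> D1) = int k1"
    using assms(3) by linarith
  then show ?thesis
  proof cases
    case 1
    then have "C \<inter> D2 = D2"
      using subset_cyclic_eqI[OF swap.cyclic1, of "C \<inter> D2"] swap.nullity1 by simp
    then show ?thesis
      using 1 by blast
  next
    case 2
    then have "C \<inter> D1 = D1"
      using subset_cyclic_eqI[OF cyclic1, of "C \<inter> D1"] nullity1 by simp
    then show ?thesis
      using 2 by blast
  qed
qed

lemma glued_block_if_kfold:
  assumes "C \<subseteq> D1 \<union> D2" "kfold_circuit E r (k1 + k2 - 1) C"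
  shows "\<exists>A \<in> glue_partitions e P1 A1 P2 A2. C = (D1 \<union> D2) - A"
proof (cases "e \<in> C")
  case False
  then show ?thesis
    using eq_Diff_e_if_kfold assms unfolding glue_partitions_def by blast
next
  case True
  interpret swap: parallel_connection_principal_partitions E r D2 D1 e k2 k1 P2 P1 A2 A1
    by (rule parallel_connection_principal_partitions_swap)
  have C: "cyclic E r C" "nullity C = int k1 + int k2 - 1"
    using assms(2) k1_pos kfold_circuit_iff_nullity by auto
  moreover have "nullity (D1 \<union> D2) = int k1 + int k2"
    using nullity_parallel_connection e_in_sides nullity1 swap.nullity1 by simp
  ultimately have "C \<noteq> D1 \<union> D2"
    by auto
  from side_subset_if_nullity_drop[OF assms(1) True C(2)] show ?thesis
  proof
    assume "D2 \<subseteq> C \<and> nullity (C \<inter> D1) = int k1 - 1"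
    then show ?thesis
      using glued_block_if_kfold_containing_side2 assms(1) C True \<open>C \<noteq> D1 \<union> D2\<close> by blast
  next
    assume "D1 \<subseteq> C \<and> nullity (C \<inter> D2) = int k2 - 1"
    then show ?thesis
      using swap.glued_block_if_kfold_containing_side2[of C] assms(1) C True \<open>C \<noteq> D1 \<union> D2\<close>
      by (auto simp: Un_commute Int_commute glue_partitions_swap)
  qed
qed

lemma principal_partition_glue_partitions:
  "principal_partition E r (D1 \<union> D2) (glue_partitions e P1 A1 P2 A2)"
proof -
  interpret swap: parallel_connection_principal_partitions E r D2 D1 e k2 k1 P2 P1 A2 A1
    by (rule parallel_connection_principal_partitions_swap)
  have "kfold_circuit E r (k1 + k2) (D1 \<union> D2)"
    using kfold_circuit_Un_iff kfold1 kfold2 by blast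
  moreover have "partition_on (D1 \<union> D2) (glue_partitions e P1 A1 P2 A2)"
    by (rule partition_on_glue_partitions[OF partition1 A1 swap.partition1 A2 sides_Int])
  moreover have "(\<lambda>A. (D1 \<union> D2) - A) ` glue_partitions e P1 A1 P2 A2
      = {C. C \<subseteq> D1 \<union> D2 \<and> kfold_circuit E r (k1 + k2 - 1) C}"
  proof (intro equalityI subsetI)
    fix C
    assume "C \<in> (\<lambda>A. (D1 \<union> D2) - A) ` glue_partitions e P1 A1 P2 A2"
    then obtain A where "A \<in> glue_partitions e P1 A1 P2 A2" "C = (D1 \<union> D2) - A"
      by blast
    then show "C \<in> {C. C \<subseteq> D1 \<union> D2 \<and> kfold_circuit E r (k1 + k2 - 1) C}"
      using kfold_Diff_glued_block by blast
  next
    fix C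
    assume "C \<in> {C. C \<subseteq> D1 \<union> D2 \<and> kfold_circuit E r (k1 + k2 - 1) C}"
    then show "C \<in> (\<lambda>A. (D1 \<union> D2) - A) ` glue_partitions e P1 A1 P2 A2"
      using glued_block_if_kfold by blast
  qed
  moreover have "1 \<le> k1 + k2"
    using k1_pos by simp
  ultimately show ?thesis
    unfolding principal_partition_def by blast
qed

end

theorem proposition2p17:
  fixes E :: "'a set" and r :: "'a set \<Rightarrow> nat" and D D1 D2 :: "'a set" and e :: 'a
  assumes "matroid E r"
    and "D1 \<inter> D2 = {e}"
    and "D = D1 \<union> D2"
    and "parallel_connection_restr E r D1 D2 e"
  shows "(\<forall>k. kfold_circuit E r k D \<longleftrightarrow>
            (\<exists>k1 k2. kfold_circuit E r k1 D1 \<and> kfold_circuit E r k2 D2 \<and> k = k1 + k2))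
    \<and> (\<forall>k1 k2 P1 P2 A1 A2.
          kfold_circuit E r k1 D1 \<and> kfold_circuit E r k2 D2
          \<and> principal_partition E r D1 P1 \<and> principal_partition E r D2 P2
          \<and> e \<in> A1 \<and> A1 \<in> P1 \<and> e \<in> A2 \<and> A2 \<in> P2
          \<longrightarrow> principal_partition E r D
                (((P1 - {A1}) \<union> (P2 - {A2}) \<union> {A1 - {e}, A2 - {e}, {e}}) - {{}}))"
proof -
  interpret parallel_connection E r D1 D2 e
    using assms(1,4) by unfold_locales
  have "principal_partition E r D (glue_partitions e P1 A1 P2 A2)"
    if "kfold_circuit E r k1 D1" "kfold_circuit E r k2 D2"
      "principal_partition E r D1 P1" "principal_partition E r D2 P2"
      "A1 \<in> P1" "e \<in> A1" "A2 \<in> P2" "e \<in> A2" for k1 k2 P1 P2 A1 A2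
  proof -
    interpret parallel_connection_principal_partitions E r D1 D2 e k1 k2 P1 P2 A1 A2
      using that by unfold_locales
    show ?thesis
      using principal_partition_glue_partitions assms(3) by simp
  qed
  then show ?thesis
    using kfold_circuit_Un_iff assms(3) unfolding glue_partitions_def by blast
qed

end
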